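(* Let $n\geq 4$ and let $\delta: VT_n\to\mathrm{GL}_{n+1}(\mathbb{C})$ be a homogeneous $3$-local representation of the virtual twin group $VT_n$. Then $\delta$ is equivalent to one of the fourteen representations $\delta_j$, $1\leq j\leq 14$, defined by $\delta_j(s_i)=\mathrm{diag}(I_{i-1},M_j,I_{n-i-1})$ and $\delta_j(\rho_i)=\mathrm{diag}(I_{i-1},N_j,I_{n-i-1})$ for all $1\leq i\leq n-1$, where: (1) $M_1=\begin{pmatrix}1&0&0\\0&e&\frac{1-e^2}{h}\\0&h&-e\end{pmatrix}$, $N_1=\begin{pmatrix}1&0&0\\0&0&p\\0&\frac1p&0\end{pmatrix}$, $e\in\mathbb{C}$, $h,p\in\mathbb{C}^*$; (2) $M_2=\begin{pmatrix}-e&\frac{1-e^2}{d}&0\\d&e&0\\0&0&1\end{pmatrix}$, $N_2=\begin{pmatrix}0&k&0\\\frac1k&0&0\\0&0&1\end{pmatrix}$, $e\in\mathbb{C}$, $d,k\in\mathbb{C}^*$; (3) $M_3=\begin{pmatrix}1&0&0\\d&-1&2p-dp^2\\0&0&1\end{pmatrix}$, $N_3=\begin{pmatrix}1&0&0\\\frac1p&-1&p\\0&0&1\end{pmatrix}$, $d\in\mathbb{C}$, $p\in\mathbb{C}^*$; (4) $M_4=\begin{pmatrix}1&2k-hk^2&0\\0&-1&0\\0&h&1\end{pmatrix}$, $N_4=\begin{pmatrix}1&k&0\\0&-1&0\\0&\frac1k&1\end{pmatrix}$, $h\in\mathbb{C}$, $k\in\mathbb{C}^*$; (5) $M_5=\begin{pmatrix}1&b&0\\0&-1&0\\0&0&1\end{pmatrix}$,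 $N_5=\begin{pmatrix}0&k&0\\\frac1k&0&0\\0&0&1\end{pmatrix}$, $b\in\mathbb{C}$, $k\in\mathbb{C}^*$; (6) $M_6=\begin{pmatrix}-1&b&0\\0&1&0\\0&0&1\end{pmatrix}$, $N_6=\begin{pmatrix}0&k&0\\\frac1k&0&0\\0&0&1\end{pmatrix}$, $b\in\mathbb{C}$, $k\in\mathbb{C}^*$; (7) $M_7=I_3$, $N_7=\begin{pmatrix}1&0&0\\\frac1p&-1&p\\0&0&1\end{pmatrix}$, $p\in\mathbb{C}^*$; (8) $M_8=I_3$, $N_8=\begin{pmatrix}1&k&0\\0&-1&0\\0&\frac1k&1\end{pmatrix}$, $k\in\mathbb{C}^*$; (9) $M_9=\mathrm{diag}(1,-1,-1)$, $N_9=\begin{pmatrix}1&0&0\\0&0&p\\0&\frac1p&0\end{pmatrix}$, $p\in\mathbb{C}^*$; (10) $M_{10}=\mathrm{diag}(1,-1,1)$, $N_{10}=\begin{pmatrix}1&0&0\\0&0&p\\0&\frac1p&0\end{pmatrix}$, $p\in\mathbb{C}^*$; (11) $M_{11}=I_3$, $N_{11}=\begin{pmatrix}1&0&0\\0&0&p\\0&\frac1p&0\end{pmatrix}$, $p\in\mathbb{C}^*$; (12) $M_{12}=\mathrm{diag}(-1,-1,1)$, $N_{12}=\begin{pmatrix}0&k&0\\\frac1k&0&0\\0&0&1\end{pmatrix}$, $k\in\mathbb{C}^*$; (13) $M_{13}=I_3$, $N_{13}=\begin{pmatrix}0&k&0\\\frac1k&0&0\\0&0&1\end{pmatrix}$,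 $k\in\mathbb{C}^*$; (14) $M_{14}=I_3$, $N_{14}=I_3$.
   Context: The virtual twin group $VT_n$ ($n\geq 2$) has generators $s_1,\dots,s_{n-1},\rho_1,\dots,\rho_{n-1}$ and defining relations: $s_i^2=1$ ($1\le i\le n-1$); $s_is_j=s_js_i$ ($|i-j|\ge2$); $\rho_i\rho_{i+1}\rho_i=\rho_{i+1}\rho_i\rho_{i+1}$ ($1\le i\le n-2$); $\rho_i\rho_j=\rho_j\rho_i$ ($|i-j|\ge2$); $\rho_i^2=1$ ($1\le i\le n-1$); $s_i\rho_j=\rho_js_i$ ($|i-j|\ge2$); $\rho_i\rho_{i+1}s_i=s_{i+1}\rho_i\rho_{i+1}$ ($1\le i\le n-2$). A representation $\delta:VT_n\to\mathrm{GL}_{n+1}(\mathbb{C})$ is homogeneous $3$-local if there are fixed $M,N\in\mathrm{GL}_3(\mathbb{C})$ with $\delta(s_i)=\mathrm{diag}(I_{i-1},M,I_{n-i-1})$ and $\delta(\rho_i)=\mathrm{diag}(I_{i-1},N,I_{n-i-1})$ for all $1\le i\le n-1$, where $\mathrm{diag}$ denotes block-diagonal matrices and $I_r$ the $r\times r$ identity. $\mathbb{C}^*=\mathbb{C}\setminus\{0\}$. Equivalent means conjugate by an invertible matrix. *)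

theory Defs
  imports "Jordan_Normal_Form.Matrix"
begin

definition m3 :: "complex list list \<Rightarrow> complex mat" where
  "m3 rs = mat_of_rows_list 3 rs"

text \<open>The block-diagonal matrix diag(I_{i-1}, A, I_{n-i-1}) of size (n+1)x(n+1)
  (0-based rows/columns i-1, i, i+1 carry the 3x3 block A).\<close>
definition local_mat :: "nat \<Rightarrow> nat \<Rightarrow> complex mat \<Rightarrow> complex mat" where
  "local_mat n i A = mat (n+1) (n+1) (\<lambda>(r,c).
      if i - 1 \<le> r \<and> r \<le> i + 1 \<and> i - 1 \<le> c \<and> c \<le> i + 1
      then A $$ (r - (i - 1), c - (i - 1))
      else (if r = c then 1 else 0))"

text \<open>A representation of VT_n is the same as an assignment of invertible matrices to the
  generators satisfying these relations.\<close>
definition VT_rels :: "nat \<Rightarrow> (nat \<Rightarrow> complex mat) \<Rightarrow> (nat \<Rightarrow> complex mat) \<Rightarrow> bool" where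
  "VT_rels n S R \<longleftrightarrow>
     (\<forall>i\<in>{1..n-1}. S i * S i = 1\<^sub>m (n+1)) \<and>
     (\<forall>i\<in>{1..n-1}. \<forall>j\<in>{1..n-1}. (i + 2 \<le> j \<or> j + 2 \<le> i) \<longrightarrow> S i * S j = S j * S i) \<and>
     (\<forall>i\<in>{1..n-2}. R i * R (i+1) * R i = R (i+1) * R i * R (i+1)) \<and>
     (\<forall>i\<in>{1..n-1}. \<forall>j\<in>{1..n-1}. (i + 2 \<le> j \<or> j + 2 \<le> i) \<longrightarrow> R i * R j = R j * R i) \<and>
     (\<forall>i\<in>{1..n-1}. R i * R i = 1\<^sub>m (n+1)) \<and>
     (\<forall>i\<in>{1..n-1}. \<forall>j\<in>{1..n-1}. (i + 2 \<le> j \<or> j + 2 \<le> i) \<longrightarrow> S i * R j = R j * S i) \<and>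
     (\<forall>i\<in>{1..n-2}. R i * R (i+1) * S i = S (i+1) * R i * R (i+1))"

definition hom_3local_rep :: "nat \<Rightarrow> complex mat \<Rightarrow> complex mat \<Rightarrow> bool" where
  "hom_3local_rep n M N \<longleftrightarrow>
     M \<in> carrier_mat 3 3 \<and> N \<in> carrier_mat 3 3 \<and> invertible_mat M \<and> invertible_mat N \<and>
     VT_rels n (\<lambda>i. local_mat n i M) (\<lambda>i. local_mat n i N)"

definition equiv_local :: "nat \<Rightarrow> complex mat \<Rightarrow> complex mat \<Rightarrow> complex mat \<Rightarrow> complex mat \<Rightarrow> bool" where
  "equiv_local n M N M' N' \<longleftrightarrow>
     (\<exists>P Q. P \<in> carrier_mat (n+1) (n+1) \<and> Q \<in> carrier_mat (n+1) (n+1) \<and>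
        P * Q = 1\<^sub>m (n+1) \<and> Q * P = 1\<^sub>m (n+1) \<and>
        (\<forall>i\<in>{1..n-1}. local_mat n i M = P * local_mat n i M' * Q \<and>
                       local_mat n i N = P * local_mat n i N' * Q))"

definition family :: "nat \<Rightarrow> complex mat \<Rightarrow> complex mat \<Rightarrow> bool" where
  "family j M N \<longleftrightarrow>
   (j = 1 \<and> (\<exists>e h p. h \<noteq> 0 \<and> p \<noteq> 0 \<and>
      M = m3 [[1,0,0],[0,e,(1 - e^2)/h],[0,h,-e]] \<and> N = m3 [[1,0,0],[0,0,p],[0,1/p,0]])) \<or>
   (j = 2 \<and> (\<exists>e d k. d \<noteq> 0 \<and> k \<noteq> 0 \<and>
      M = m3 [[-e,(1 - e^2)/d,0],[d,e,0],[0,0,1]] \<and> N = m3 [[0,k,0],[1/k,0,0],[0,0,1]])) \<or>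
   (j = 3 \<and> (\<exists>d p. p \<noteq> 0 \<and>
      M = m3 [[1,0,0],[d,-1,2*p - d*p^2],[0,0,1]] \<and> N = m3 [[1,0,0],[1/p,-1,p],[0,0,1]])) \<or>
   (j = 4 \<and> (\<exists>h k. k \<noteq> 0 \<and>
      M = m3 [[1,2*k - h*k^2,0],[0,-1,0],[0,h,1]] \<and> N = m3 [[1,k,0],[0,-1,0],[0,1/k,1]])) \<or>
   (j = 5 \<and> (\<exists>b k. k \<noteq> 0 \<and>
      M = m3 [[1,b,0],[0,-1,0],[0,0,1]] \<and> N = m3 [[0,k,0],[1/k,0,0],[0,0,1]])) \<or>
   (j = 6 \<and> (\<exists>b k. k \<noteq> 0 \<and>
      M = m3 [[-1,b,0],[0,1,0],[0,0,1]] \<and> N = m3 [[0,k,0],[1/k,0,0],[0,0,1]])) \<or>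
   (j = 7 \<and> (\<exists>p. p \<noteq> 0 \<and>
      M = 1\<^sub>m 3 \<and> N = m3 [[1,0,0],[1/p,-1,p],[0,0,1]])) \<or>
   (j = 8 \<and> (\<exists>k. k \<noteq> 0 \<and>
      M = 1\<^sub>m 3 \<and> N = m3 [[1,k,0],[0,-1,0],[0,1/k,1]])) \<or>
   (j = 9 \<and> (\<exists>p. p \<noteq> 0 \<and>
      M = m3 [[1,0,0],[0,-1,0],[0,0,-1]] \<and> N = m3 [[1,0,0],[0,0,p],[0,1/p,0]])) \<or>
   (j = 10 \<and> (\<exists>p. p \<noteq> 0 \<and>
      M = m3 [[1,0,0],[0,-1,0],[0,0,1]] \<and> N = m3 [[1,0,0],[0,0,p],[0,1/p,0]])) \<or>
   (j = 11 \<and> (\<exists>p. p \<noteq> 0 \<and>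
      M = 1\<^sub>m 3 \<and> N = m3 [[1,0,0],[0,0,p],[0,1/p,0]])) \<or>
   (j = 12 \<and> (\<exists>k. k \<noteq> 0 \<and>
      M = m3 [[-1,0,0],[0,-1,0],[0,0,1]] \<and> N = m3 [[0,k,0],[1/k,0,0],[0,0,1]])) \<or>
   (j = 13 \<and> (\<exists>k. k \<noteq> 0 \<and>
      M = 1\<^sub>m 3 \<and> N = m3 [[0,k,0],[1/k,0,0],[0,0,1]])) \<or>
   (j = 14 \<and> M = 1\<^sub>m 3 \<and> N = 1\<^sub>m 3)"

end

theory Submission
  imports Defs "Jordan_Normal_Form.Determinant"
begin

text \<open>
  Their
  images act on the first five coordinates, so every computation happens in the upper left
  5x5 corner; this is where \<open>n \<ge> 4\<close> enters. Far commutativity of the generators with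
  indices 1 and 3 makes M and N tridiagonal and ties their entries together; with
  \<open>\<rho>\<^sub>1\<^sup>2 = 1\<close> and the braid relation this leaves five possible shapes for N, namely
  \<open>N\<^sub>4, N\<^sub>2, N\<^sub>3, N\<^sub>1\<close> and \<open>I\<^sub>3\<close>. For each of them \<open>s\<^sub>1\<^sup>2 = 1\<close> and
  \<open>\<rho>\<^sub>1\<rho>\<^sub>2s\<^sub>1 = s\<^sub>2\<rho>\<^sub>1\<rho>\<^sub>2\<close> pin down M. Only for \<open>N = N\<^sub>1\<close> does a pair
  outside the list survive: M acts on the last two coordinates by a triangular involution
  with eigenvalues 1 and -1. Conjugating by the cyclic shift of the basis moves the 2x2
  blocks of M and N to the upper left, where the pair becomes a member of family 5 or 6.
\<close>

lemma local_mat_carrier [simp]: "local_mat n i A \<in> carrier_mat (Suc n) (Suc n)"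
  by (simp add: local_mat_def)

lemma local_mat_mult_carrier [simp]:
  "local_mat n i A * local_mat n j B \<in> carrier_mat (Suc n) (Suc n)"
  by (rule mult_carrier_mat[of _ "Suc n" "Suc n"]) simp_all

lemma local_mat_mult_assoc:
  "local_mat n i A * local_mat n j B * local_mat n k C =
   local_mat n i A * (local_mat n j B * local_mat n k C)"
  by (rule assoc_mult_mat[of _ "Suc n" "Suc n" _ "Suc n" _ "Suc n"]) simp_all

lemma local_mat_index:
  "r \<le> n \<Longrightarrow> c \<le> n \<Longrightarrow> local_mat n i A $$ (r,c) =
    (if i - 1 \<le> r \<and> r \<le> i + 1 \<and> i - 1 \<le> c \<and> c \<le> i + 1
     then A $$ (r - (i - 1), c - (i - 1)) else if r = c then 1 else 0)"
  by (simp add: local_mat_def)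

lemma local_mat_index_corner:
  "4 \<le> n \<Longrightarrow> r < 5 \<Longrightarrow> c < 5 \<Longrightarrow> local_mat n i A $$ (r,c) =
    (if i - 1 \<le> r \<and> r \<le> i + 1 \<and> i - 1 \<le> c \<and> c \<le> i + 1
     then A $$ (r - (i - 1), c - (i - 1)) else if r = c then 1 else 0)"
  by (simp add: local_mat_def)

lemma one_mat_index_corner:
  "4 \<le> n \<Longrightarrow> r < 5 \<Longrightarrow> c < 5 \<Longrightarrow> 1\<^sub>m (Suc n) $$ (r,c) = (if r = c then 1 else 0)"
  by simp

lemma local_mat_mult_index_corner:
  assumes "4 \<le> n" "i \<le> 3" "r < 5" "c < 5" "Y \<in> carrier_mat (Suc n) (Suc n)"
  shows "(local_mat n i A * Y) $$ (r,c) = (\<Sum>k<5. local_mat n i A $$ (r,k) * Y $$ (k,c))"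
proof -
  have "(local_mat n i A * Y) $$ (r,c) = (\<Sum>k<Suc n. local_mat n i A $$ (r,k) * Y $$ (k,c))"
    using assms by (simp add: scalar_prod_def local_mat_def atLeast0LessThan)
  also have "\<dots> = (\<Sum>k<5. local_mat n i A $$ (r,k) * Y $$ (k,c))"
  proof (rule sum.mono_neutral_right)
    show "\<forall>k\<in>{..<Suc n} - {..<5}. local_mat n i A $$ (r,k) * Y $$ (k,c) = 0"
      using assms by (auto simp: local_mat_index)
  qed (use assms in auto)
  finally show ?thesis .
qed

lemma m3_index:
  "i < 3 \<Longrightarrow> j < 3 \<Longrightarrow> m3 [[a,b,c],[d,e,f],[g,h,k]] $$ (i,j) =
    [[a,b,c],[d,e,f],[g,h,k]] ! i ! j"
  by (simp add: m3_def mat_of_rows_list_def)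

lemma m3_entries:
  assumes "A \<in> carrier_mat 3 3"
  shows "A = m3 [[A $$ (0,0), A $$ (0,1), A $$ (0,2)],
                 [A $$ (1,0), A $$ (1,1), A $$ (1,2)],
                 [A $$ (2,0), A $$ (2,1), A $$ (2,2)]]" (is "A = ?B")
proof (rule eq_matI)
  fix i j assume "i < dim_row ?B" "j < dim_col ?B"
  then have "i \<in> {0,1,2}" "j \<in> {0,1,2}" by (auto simp: m3_def mat_of_rows_list_def)
  then show "A $$ (i,j) = ?B $$ (i,j)" by (auto simp: m3_index)
qed (use assms in \<open>simp_all add: m3_def mat_of_rows_list_def\<close>)

lemma m3_one: "m3 [[1,0,0],[0,1,0],[0,0,1]] = 1\<^sub>m 3"
  by (rule m3_entries[of "1\<^sub>m 3", simplified, symmetric])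

lemmas corner_simps = local_mat_mult_index_corner local_mat_index_corner one_mat_index_corner
  local_mat_mult_assoc m3_index lessThan_nat_numeral

lemma local_mat_far_commute_entries:
  assumes n: "4 \<le> n"
    and rel: "local_mat n 1 X * local_mat n 3 Y = local_mat n 3 Y * local_mat n 1 X"
  shows "X $$ (0,2) = 0 \<or> Y $$ (0,2) = 0" "X $$ (2,0) = 0 \<or> Y $$ (2,0) = 0"
    "X $$ (1,2) = 0 \<or> Y $$ (0,0) = 1" "X $$ (2,1) = 0 \<or> Y $$ (0,0) = 1"
    "Y $$ (0,1) = 0 \<or> X $$ (2,2) = 1" "Y $$ (1,0) = 0 \<or> X $$ (2,2) = 1"
    "X $$ (1,2) = 0 \<or> Y $$ (0,1) = 0" "X $$ (2,1) = 0 \<or> Y $$ (1,0) = 0"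
proof -
  have e: "(local_mat n 1 X * local_mat n 3 Y) $$ (r,c) = (local_mat n 3 Y * local_mat n 1 X) $$ (r,c)"
    for r c using rel by simp
  show "X $$ (0,2) = 0 \<or> Y $$ (0,2) = 0" using e[of 0 4] n by (auto simp: corner_simps)
  show "X $$ (2,0) = 0 \<or> Y $$ (2,0) = 0" using e[of 4 0] n by (auto simp: corner_simps)
  show "X $$ (1,2) = 0 \<or> Y $$ (0,0) = 1" using e[of 1 2] n by (auto simp: corner_simps)
  show "X $$ (2,1) = 0 \<or> Y $$ (0,0) = 1" using e[of 2 1] n by (auto simp: corner_simps)
  show "Y $$ (0,1) = 0 \<or> X $$ (2,2) = 1" using e[of 2 3] n by (auto simp: corner_simps)
  show "Y $$ (1,0) = 0 \<or> X $$ (2,2) = 1" using e[of 3 2] n by (auto simp: corner_simps)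
  show "X $$ (1,2) = 0 \<or> Y $$ (0,1) = 0" using e[of 1 3] n by (auto simp: corner_simps)
  show "X $$ (2,1) = 0 \<or> Y $$ (1,0) = 0" using e[of 3 1] n by (auto simp: corner_simps)
qed

lemma local_mat_far_commute_tridiagonal:
  assumes "4 \<le> n" "X \<in> carrier_mat 3 3"
    and "local_mat n 1 X * local_mat n 3 X = local_mat n 3 X * local_mat n 1 X"
  obtains x00 x01 x10 x11 x12 x21 x22
  where "X = m3 [[x00,x01,0],[x10,x11,x12],[0,x21,x22]]"
  using local_mat_far_commute_entries(1,2)[OF assms(1,3)] m3_entries[OF assms(2)] by metis

lemma local_mat_involution_entries:
  assumes n: "4 \<le> n" and rel: "local_mat n 1 X * local_mat n 1 X = 1\<^sub>m (n+1)"
    and X: "X = m3 [[a,b,0],[c,d,e],[0,f,g]]"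
  shows "a*a + b*c = 1" "a*b + b*d = 0" "b*e = 0"
    "c*a + d*c = 0" "c*b + d*d + e*f = 1" "d*e + e*g = 0"
    "f*c = 0" "f*d + g*f = 0" "f*e + g*g = 1"
proof -
  have e: "(local_mat n 1 X * local_mat n 1 X) $$ (r,c) = 1\<^sub>m (Suc n) $$ (r,c)"
    for r c using rel by simp
  show "a*a + b*c = 1" using e[of 0 0] n by (simp add: corner_simps X algebra_simps)
  show "a*b + b*d = 0" using e[of 0 1] n by (simp add: corner_simps X algebra_simps)
  show "b*e = 0" using e[of 0 2] n by (simp add: corner_simps X algebra_simps)
  show "c*a + d*c = 0" using e[of 1 0] n by (simp add: corner_simps X algebra_simps)
  show "c*b + d*d + e*f = 1" using e[of 1 1] n by (simp add: corner_simps X algebra_simps)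
  show "d*e + e*g = 0" using e[of 1 2] n by (simp add: corner_simps X algebra_simps)
  show "f*c = 0" using e[of 2 0] n by (simp add: corner_simps X algebra_simps)
  show "f*d + g*f = 0" using e[of 2 1] n by (simp add: corner_simps X algebra_simps)
  show "f*e + g*g = 1" using e[of 2 2] n by (simp add: corner_simps X algebra_simps)
qed

lemma local_mat_braid_entries:
  assumes n: "4 \<le> n"
    and rel: "local_mat n 1 X * local_mat n 2 X * local_mat n 1 X =
              local_mat n 2 X * local_mat n 1 X * local_mat n 2 X"
    and X: "X = m3 [[a,b,0],[c,d,e],[0,f,g]]"
  shows "a*a + a*b*c = a"
    "b*c + a*d*d + b*d*f + c*d*e + d*e*f = a*a*d + a*b*f + a*c*e + b*c*g"
    "a*e*f + b*f*g + c*e*g + d*g*g = e*f + b*c*d + b*d*f + c*d*e + d*d*g"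
    "g*g + e*f*g = g"
proof -
  have e: "(local_mat n 1 X * local_mat n 2 X * local_mat n 1 X) $$ (r,r) =
           (local_mat n 2 X * local_mat n 1 X * local_mat n 2 X) $$ (r,r)"
    for r using rel by simp
  show "a*a + a*b*c = a" using e[of 0] n by (simp add: corner_simps X algebra_simps)
  show "b*c + a*d*d + b*d*f + c*d*e + d*e*f = a*a*d + a*b*f + a*c*e + b*c*g"
    using e[of 1] n by (simp add: corner_simps X algebra_simps)
  show "a*e*f + b*f*g + c*e*g + d*g*g = e*f + b*c*d + b*d*f + c*d*e + d*d*g"
    using e[of 2] n by (simp add: corner_simps X algebra_simps)
  show "g*g + e*f*g = g" using e[of 3] n by (simp add: corner_simps X algebra_simps)
qed

lemma local_mat_mixed_entries:
  assumes n: "4 \<le> n"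
    and rel: "local_mat n 1 N * local_mat n 2 N * local_mat n 1 M =
              local_mat n 2 M * local_mat n 1 N * local_mat n 2 N"
    and M: "M = m3 [[m00,m01,0],[m10,m11,m12],[0,m21,m22]]"
    and N: "N = m3 [[a,b,0],[c,d,e],[0,f,g]]"
  shows "a*m00 + a*b*m10 = a"
    "a*m01 + b*(a*m11 + b*m21) = a*b"
    "b*(a*m12 + b*m22) = b*b"
    "m10*(a*d + c*e) = 0"
    "c*m01 + d*(a*m11 + b*m21) + e*(c*m11 + d*m21) = m00*(a*d + c*e) + m01*(a*f + c*g)"
    "m10*(a*f + c*g) = c*m10"
    "e*g = m10*e*e + m11*e*g + m12*g"
    "m21*(b*f + d*g) = 0"
    "g = m21*e*g + m22*g"
proof -
  have e: "(local_mat n 1 N * local_mat n 2 N * local_mat n 1 M) $$ (r,c) =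
           (local_mat n 2 M * local_mat n 1 N * local_mat n 2 N) $$ (r,c)"
    for r c using rel by simp
  show "a*m00 + a*b*m10 = a" using e[of 0 0] n by (simp add: corner_simps M N algebra_simps)
  show "a*m01 + b*(a*m11 + b*m21) = a*b" using e[of 0 1] n by (simp add: corner_simps M N algebra_simps)
  show "b*(a*m12 + b*m22) = b*b" using e[of 0 2] n by (simp add: corner_simps M N algebra_simps)
  show "m10*(a*d + c*e) = 0" using e[of 1 0] n by (simp add: corner_simps M N algebra_simps)
  show "c*m01 + d*(a*m11 + b*m21) + e*(c*m11 + d*m21) = m00*(a*d + c*e) + m01*(a*f + c*g)"
    using e[of 1 1] n by (simp add: corner_simps M N algebra_simps)
  show "m10*(a*f + c*g) = c*m10" using e[of 2 0] n by (simp add: corner_simps M N algebra_simps)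
  show "e*g = m10*e*e + m11*e*g + m12*g" using e[of 2 3] n by (simp add: corner_simps M N algebra_simps)
  show "m21*(b*f + d*g) = 0" using e[of 3 2] n by (simp add: corner_simps M N algebra_simps)
  show "g = m21*e*g + m22*g" using e[of 3 3] n by (simp add: corner_simps M N algebra_simps)
qed

lemma hom_3local_rep_relations:
  assumes "4 \<le> n" and "hom_3local_rep n M N"
  shows "M \<in> carrier_mat 3 3" and "N \<in> carrier_mat 3 3"
    and "local_mat n 1 M * local_mat n 1 M = 1\<^sub>m (n+1)"
    and "local_mat n 1 N * local_mat n 1 N = 1\<^sub>m (n+1)"
    and "local_mat n 1 M * local_mat n 3 M = local_mat n 3 M * local_mat n 1 M"
    and "local_mat n 1 N * local_mat n 3 N = local_mat n 3 N * local_mat n 1 N"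
    and "local_mat n 1 M * local_mat n 3 N = local_mat n 3 N * local_mat n 1 M"
    and "local_mat n 1 N * local_mat n 3 M = local_mat n 3 M * local_mat n 1 N"
    and "local_mat n 1 N * local_mat n 2 N * local_mat n 1 N =
         local_mat n 2 N * local_mat n 1 N * local_mat n 2 N"
    and "local_mat n 1 N * local_mat n 2 N * local_mat n 1 M =
         local_mat n 2 M * local_mat n 1 N * local_mat n 2 N"
proof -
  have idx: "(1::nat) \<in> {1..n-1}" "(3::nat) \<in> {1..n-1}" "(1::nat) \<in> {1..n-2}"
    using assms(1) by auto
  note rep = assms(2)[unfolded hom_3local_rep_def VT_rels_def]
  show "M \<in> carrier_mat 3 3" "N \<in> carrier_mat 3 3" using rep by simp_all
  show "local_mat n 1 M * local_mat n 1 M = 1\<^sub>m (n+1)"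
    "local_mat n 1 N * local_mat n 1 N = 1\<^sub>m (n+1)"
    using rep idx by blast+
  show "local_mat n 1 M * local_mat n 3 M = local_mat n 3 M * local_mat n 1 M"
    "local_mat n 1 N * local_mat n 3 N = local_mat n 3 N * local_mat n 1 N"
    "local_mat n 1 M * local_mat n 3 N = local_mat n 3 N * local_mat n 1 M"
    using rep idx by force+
  have "local_mat n 3 M * local_mat n 1 N = local_mat n 1 N * local_mat n 3 M"
    using rep idx by force
  then show "local_mat n 1 N * local_mat n 3 M = local_mat n 3 M * local_mat n 1 N" ..
  show "local_mat n 1 N * local_mat n 2 N * local_mat n 1 N =
        local_mat n 2 N * local_mat n 1 N * local_mat n 2 N"
    "local_mat n 1 N * local_mat n 2 N * local_mat n 1 M =
     local_mat n 2 M * local_mat n 1 N * local_mat n 2 N"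
    using rep idx(3) one_add_one by metis+
qed

lemma involution_2x2_cases:
  fixes x y z w :: "'a :: field"
  assumes "x*x + y*z = 1" "x*y + y*w = 0" "z*x + w*z = 0" "z*y + w*w = 1"
  shows "(z \<noteq> 0 \<and> w = -x \<and> y = (1 - x^2)/z) \<or> (z = 0 \<and> x = 1 \<and> w = 1 \<and> y = 0) \<or>
    (z = 0 \<and> x = -1 \<and> w = -1 \<and> y = 0) \<or> (z = 0 \<and> x = 1 \<and> w = -1) \<or> (z = 0 \<and> x = -1 \<and> w = 1)"
proof (cases "z = 0")
  case False
  moreover have "z * (x + w) = 0" using assms(3) by (simp add: algebra_simps)
  ultimately have "w = -x" by (simp add: add_eq_0_iff)
  moreover have "y = (1 - x^2)/z" using assms(1) \<open>z \<noteq> 0\<close> by (simp add: field_simps power2_eq_square)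
  ultimately show ?thesis using False by simp
next
  case True
  then have "x = 1 \<or> x = -1" "w = 1 \<or> w = -1" using assms(1,4) square_eq_1_iff by auto
  moreover have "y * (x + w) = 0" using assms(2) by (simp add: algebra_simps)
  ultimately show ?thesis using True by auto
qed

lemma braided_involution_cases:
  fixes a b c d e f g :: complex
  assumes S00: "a*a + b*c = 1" and S01: "a*b + b*d = 0" and S02: "b*e = 0"
    and S10: "c*a + d*c = 0" and S11: "c*b + d*d + e*f = 1" and S12: "d*e + e*g = 0"
    and S20: "f*c = 0" and S21: "f*d + g*f = 0" and S22: "f*e + g*g = 1"
    and F1: "e = 0 \<or> a = 1" and F2: "f = 0 \<or> a = 1"
    and F3: "b = 0 \<or> g = 1" and F4: "c = 0 \<or> g = 1"
    and B0: "a*a + a*b*c = a"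
    and B1: "b*c + a*d*d + b*d*f + c*d*e + d*e*f = a*a*d + a*b*f + a*c*e + b*c*g"
    and B2: "a*e*f + b*f*g + c*e*g + d*g*g = e*f + b*c*d + b*d*f + c*d*e + d*d*g"
    and B3: "g*g + e*f*g = g"
  shows "(b \<noteq> 0 \<and> a = 1 \<and> c = 0 \<and> d = -1 \<and> e = 0 \<and> f = 1/b \<and> g = 1) \<or>
         (b \<noteq> 0 \<and> a = 0 \<and> c = 1/b \<and> d = 0 \<and> e = 0 \<and> f = 0 \<and> g = 1) \<or>
         (e \<noteq> 0 \<and> a = 1 \<and> b = 0 \<and> c = 1/e \<and> d = -1 \<and> f = 0 \<and> g = 1) \<or>
         (e \<noteq> 0 \<and> a = 1 \<and> b = 0 \<and> c = 0 \<and> d = 0 \<and> f = 1/e \<and> g = 0) \<or>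
         (a = 1 \<and> b = 0 \<and> c = 0 \<and> d = 1 \<and> e = 0 \<and> f = 0 \<and> g = 1)"
proof -
  consider "b \<noteq> 0" | "b = 0" "c \<noteq> 0" | "b = 0" "c = 0" "e \<noteq> 0 \<or> f \<noteq> 0"
    | "b = 0" "c = 0" "e = 0" "f = 0" by blast
  then show ?thesis
  proof cases
    case 1
    have "b * (a + d) = 0" using S01 by (simp add: algebra_simps)
    then have "d = -a" "e = 0" "g = 1" using 1 S02 F3 by (auto simp: add_eq_0_iff)
    show ?thesis
    proof (cases "f = 0")
      case False
      then have "a = 1" "c = 0" using F2 S20 by auto
      with B1 \<open>d = -a\<close> \<open>e = 0\<close> \<open>g = 1\<close> have "b*f = 1" by (simp add: algebra_simps)
      with 1 \<open>d = -a\<close> \<open>e = 0\<close> \<open>g = 1\<close> \<open>a = 1\<close> \<open>c = 0\<close> show ?thesis by (simp add: field_simps)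
    next
      case True
      with B1 \<open>d = -a\<close> \<open>e = 0\<close> \<open>g = 1\<close> have "a = 0" by (simp add: algebra_simps)
      with S00 1 True \<open>d = -a\<close> \<open>e = 0\<close> \<open>g = 1\<close> show ?thesis by (simp add: field_simps)
    qed
  next
    case 2
    have "c * (a + d) = 0" using S10 by (simp add: algebra_simps)
    then have "d = -a" "g = 1" "f = 0" using 2 F4 S20 by (auto simp: add_eq_0_iff)
    with B1 S00 2 have "e \<noteq> 0" by (auto simp: algebra_simps)
    with F1 have "a = 1" by simp
    with B1 2 \<open>d = -a\<close> \<open>f = 0\<close> \<open>g = 1\<close> have "c*e = 1" by (simp add: algebra_simps)
    with 2 \<open>d = -a\<close> \<open>f = 0\<close> \<open>g = 1\<close> \<open>a = 1\<close> \<open>e \<noteq> 0\<close> show ?thesis by (simp add: field_simps)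
  next
    case 3
    then have "a = 1" using F1 F2 by auto
    have "e * (d + g) = 0" "f * (d + g) = 0" using S12 S21 by (simp_all add: algebra_simps)
    then have "g = -d" using 3 by (auto simp: add_eq_0_iff)
    with B2 3 \<open>a = 1\<close> have "d = 0" by (simp add: algebra_simps)
    with S11 3 have "e*f = 1" by (simp add: mult.commute)
    then have "e \<noteq> 0" "f = 1/e" using inverse_unique[of e f] by (auto simp: inverse_eq_divide)
    with 3 \<open>a = 1\<close> \<open>g = -d\<close> \<open>d = 0\<close> show ?thesis by simp
  next
    case 4
    with S00 B0 S22 B3 have "a = 1" "g = 1" by (simp_all add: algebra_simps)
    with S11 B1 4 have "d = 1" by (simp add: algebra_simps)
    with 4 \<open>a = 1\<close> \<open>g = 1\<close> show ?thesis by simp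
  qed
qed

text \<open>In the next five lemmas N is one of the matrices \<open>N\<^sub>j\<close> of the theorem, j being
  the suffix of the lemma name.\<close>

lemma hom_3local_rep_N4:
  assumes n: "4 \<le> n" and rep: "hom_3local_rep n M N"
    and k: "k \<noteq> 0" and N: "N = m3 [[1,k,0],[0,-1,0],[0,1/k,1]]"
  shows "\<exists>j\<in>{4,8}. family j M N"
proof -
  note R = hom_3local_rep_relations[OF n rep]
  obtain m00 m01 m10 m11 m12 m21 m22 where M: "M = m3 [[m00,m01,0],[m10,m11,m12],[0,m21,m22]]"
    using local_mat_far_commute_tridiagonal[OF n R(1) R(5)] .
  have "m12 = 0" "m22 = 1"
    using local_mat_far_commute_entries(7,5)[OF n R(7)] k by (simp_all add: M N m3_index)
  moreover have "m00 = 1" "m10 = 0"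
    using local_mat_far_commute_entries(4,8)[OF n R(8)] k by (simp_all add: M N m3_index)
  moreover note local_mat_involution_entries(2,5,8)[OF n R(3) M]
  moreover have "m01 + k*m11 + k*k*m21 = k"
    using local_mat_mixed_entries(2)[OF n R(10) M N] by (simp add: algebra_simps)
  ultimately have "m11 = 1 \<and> m01 = 0 \<and> m21 = 0 \<or> m11 = -1 \<and> m01 = 2*k - m21*k^2"
    using square_eq_1_iff[of m11] by (auto simp: algebra_simps power2_eq_square)
  then show ?thesis
    unfolding family_def using k
    by (auto simp: M N \<open>m00 = 1\<close> \<open>m10 = 0\<close> \<open>m12 = 0\<close> \<open>m22 = 1\<close> m3_one[symmetric])
qed

lemma hom_3local_rep_N2:
  assumes n: "4 \<le> n" and rep: "hom_3local_rep n M N"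
    and k: "k \<noteq> 0" and N: "N = m3 [[0,k,0],[1/k,0,0],[0,0,1]]"
  shows "\<exists>j\<in>{2,5,6,12,13}. family j M N"
proof -
  note R = hom_3local_rep_relations[OF n rep]
  obtain m00 m01 m10 m11 m12 m21 m22 where M: "M = m3 [[m00,m01,0],[m10,m11,m12],[0,m21,m22]]"
    using local_mat_far_commute_tridiagonal[OF n R(1) R(5)] .
  note X = local_mat_mixed_entries(2,3,7)[OF n R(10) M N]
  have "m21 = 0" "m22 = 1" "m12 = 0" using X k by simp_all
  moreover note local_mat_involution_entries(1,2,4,5)[OF n R(3) M]
  ultimately have "(m10 \<noteq> 0 \<and> m11 = -m00 \<and> m01 = (1 - m00^2)/m10) \<or>
    (m10 = 0 \<and> m00 = 1 \<and> m11 = 1 \<and> m01 = 0) \<or> (m10 = 0 \<and> m00 = -1 \<and> m11 = -1 \<and> m01 = 0) \<or>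
    (m10 = 0 \<and> m00 = 1 \<and> m11 = -1) \<or> (m10 = 0 \<and> m00 = -1 \<and> m11 = 1)"
    by (intro involution_2x2_cases) simp_all
  then show ?thesis
  proof (elim disjE conjE)
    assume "m10 \<noteq> 0" "m11 = -m00" "m01 = (1 - m00^2)/m10"
    then have "M = m3 [[-m11, (1 - m11^2)/m10, 0], [m10, m11, 0], [0, 0, 1]]"
      using \<open>m21 = 0\<close> \<open>m22 = 1\<close> \<open>m12 = 0\<close> by (simp add: M)
    then show ?thesis unfolding family_def using k \<open>m10 \<noteq> 0\<close> by (auto simp: N)
  qed (use k \<open>m21 = 0\<close> \<open>m22 = 1\<close> \<open>m12 = 0\<close> in \<open>auto simp: family_def M N m3_one[symmetric]\<close>)
qed

lemma hom_3local_rep_N3: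
  assumes n: "4 \<le> n" and rep: "hom_3local_rep n M N"
    and p: "p \<noteq> 0" and N: "N = m3 [[1,0,0],[1/p,-1,p],[0,0,1]]"
  shows "\<exists>j\<in>{3,7}. family j M N"
proof -
  note R = hom_3local_rep_relations[OF n rep]
  obtain m00 m01 m10 m11 m12 m21 m22 where M: "M = m3 [[m00,m01,0],[m10,m11,m12],[0,m21,m22]]"
    using local_mat_far_commute_tridiagonal[OF n R(1) R(5)] .
  note X = local_mat_mixed_entries(1,2,7,8,9)[OF n R(10) M N]
  have "m00 = 1" "m01 = 0" "m21 = 0" using X by simp_all
  moreover have "m22 = 1" using X(5) \<open>m21 = 0\<close> by simp
  moreover note local_mat_involution_entries(4,5,6)[OF n R(3) M]
  ultimately have "m11 = 1 \<and> m10 = 0 \<and> m12 = 0 \<or> m11 = -1 \<and> m12 = 2*p - m10*p^2"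
    using X(3) square_eq_1_iff[of m11] by (auto simp: algebra_simps power2_eq_square)
  then show ?thesis
    unfolding family_def using p
    by (auto simp: M N \<open>m00 = 1\<close> \<open>m01 = 0\<close> \<open>m21 = 0\<close> \<open>m22 = 1\<close> m3_one[symmetric])
qed

lemma hom_3local_rep_N1:
  assumes n: "4 \<le> n" and rep: "hom_3local_rep n M N"
    and p: "p \<noteq> 0" and N: "N = m3 [[1,0,0],[0,0,p],[0,1/p,0]]"
  shows "(\<exists>j\<in>{1,9,11}. family j M N) \<or>
    (\<exists>y. M = m3 [[1,0,0],[0,1,y],[0,0,-1]]) \<or> (\<exists>y. M = m3 [[1,0,0],[0,-1,y],[0,0,1]])"
proof -
  note R = hom_3local_rep_relations[OF n rep]
  obtain m00 m01 m10 m11 m12 m21 m22 where M: "M = m3 [[m00,m01,0],[m10,m11,m12],[0,m21,m22]]"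
    using local_mat_far_commute_tridiagonal[OF n R(1) R(5)] .
  note X = local_mat_mixed_entries(1,2,6)[OF n R(10) M N]
  have "m00 = 1" "m01 = 0" "m10 = 0" using X p by simp_all
  moreover note local_mat_involution_entries(5,6,8,9)[OF n R(3) M]
  ultimately have "(m21 \<noteq> 0 \<and> m22 = -m11 \<and> m12 = (1 - m11^2)/m21) \<or>
    (m21 = 0 \<and> m11 = 1 \<and> m22 = 1 \<and> m12 = 0) \<or> (m21 = 0 \<and> m11 = -1 \<and> m22 = -1 \<and> m12 = 0) \<or>
    (m21 = 0 \<and> m11 = 1 \<and> m22 = -1) \<or> (m21 = 0 \<and> m11 = -1 \<and> m22 = 1)"
    by (intro involution_2x2_cases) simp_all
  then show ?thesis
    unfolding family_def using p \<open>m00 = 1\<close> \<open>m01 = 0\<close> \<open>m10 = 0\<close>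
    by (elim disjE conjE) (auto simp: M N m3_one[symmetric])
qed

lemma hom_3local_rep_N14:
  assumes n: "4 \<le> n" and rep: "hom_3local_rep n M N"
    and N: "N = m3 [[1,0,0],[0,1,0],[0,0,1]]"
  shows "family 14 M N"
proof -
  note R = hom_3local_rep_relations[OF n rep]
  obtain m00 m01 m10 m11 m12 m21 m22 where M: "M = m3 [[m00,m01,0],[m10,m11,m12],[0,m21,m22]]"
    using local_mat_far_commute_tridiagonal[OF n R(1) R(5)] .
  note X = local_mat_mixed_entries(1,2,4,5,7,8,9)[OF n R(10) M N]
  then have "M = m3 [[1,0,0],[0,1,0],[0,0,1]]" by (simp add: M)
  then show ?thesis unfolding family_def by (simp add: N m3_one)
qed

lemma hom_3local_rep_classification:
  assumes n: "4 \<le> n" and rep: "hom_3local_rep n M N"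
  shows "(\<exists>j\<in>{1..14}. family j M N) \<or>
    (\<exists>y p. p \<noteq> 0 \<and> N = m3 [[1,0,0],[0,0,p],[0,1/p,0]] \<and>
       (M = m3 [[1,0,0],[0,1,y],[0,0,-1]] \<or> M = m3 [[1,0,0],[0,-1,y],[0,0,1]]))"
proof -
  note R = hom_3local_rep_relations[OF n rep]
  obtain a b c d e f g where N: "N = m3 [[a,b,0],[c,d,e],[0,f,g]]"
    using local_mat_far_commute_tridiagonal[OF n R(2) R(6)] .
  have "e = 0 \<or> a = 1" "f = 0 \<or> a = 1" "b = 0 \<or> g = 1" "c = 0 \<or> g = 1"
    using local_mat_far_commute_entries(3-6)[OF n R(6)] by (simp_all add: N m3_index)
  from braided_involution_cases[OF local_mat_involution_entries[OF n R(4) N] this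
      local_mat_braid_entries[OF n R(9) N]]
  show ?thesis
  proof (elim disjE conjE)
    assume "b \<noteq> 0" "a = 1" "c = 0" "d = -1" "e = 0" "f = 1/b" "g = 1"
    then show ?thesis using hom_3local_rep_N4[OF n rep, of b] N by auto
  next
    assume "b \<noteq> 0" "a = 0" "c = 1/b" "d = 0" "e = 0" "f = 0" "g = 1"
    then show ?thesis using hom_3local_rep_N2[OF n rep, of b] N by auto
  next
    assume "e \<noteq> 0" "a = 1" "b = 0" "c = 1/e" "d = -1" "f = 0" "g = 1"
    then show ?thesis using hom_3local_rep_N3[OF n rep, of e] N by auto
  next
    assume "e \<noteq> 0" "a = 1" "b = 0" "c = 0" "d = 0" "f = 1/e" "g = 0"
    then show ?thesis using hom_3local_rep_N1[OF n rep, of e] N by auto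
  next
    assume "a = 1" "b = 0" "c = 0" "d = 1" "e = 0" "f = 0" "g = 1"
    then show ?thesis using hom_3local_rep_N14[OF n rep] N by auto
  qed
qed

definition cyclic_pred :: "nat \<Rightarrow> nat \<Rightarrow> nat" where
  "cyclic_pred n r = (if r = 0 then n else r - 1)"

definition cyclic_shift_mat :: "nat \<Rightarrow> complex mat" where
  "cyclic_shift_mat n = mat (n+1) (n+1) (\<lambda>(r,c). if c = cyclic_pred n r then 1 else 0)"

lemma cyclic_pred_le: "r \<le> n \<Longrightarrow> cyclic_pred n r \<le> n"
  by (auto simp: cyclic_pred_def)

lemma cyclic_pred_eq_iff: "r \<le> n \<Longrightarrow> c \<le> n \<Longrightarrow> cyclic_pred n r = cyclic_pred n c \<longleftrightarrow> r = c"
  by (auto simp: cyclic_pred_def)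

lemma cyclic_pred_eq_iff_Suc: "r \<le> n \<Longrightarrow> k < n \<Longrightarrow> cyclic_pred n r = k \<longleftrightarrow> r = Suc k"
  by (auto simp: cyclic_pred_def)

lemma cyclic_shift_mat_carrier [simp]: "cyclic_shift_mat n \<in> carrier_mat (Suc n) (Suc n)"
  by (simp add: cyclic_shift_mat_def)

lemma cyclic_shift_mat_mult_index:
  assumes "X \<in> carrier_mat (Suc n) (Suc n)" "r \<le> n" "c \<le> n"
  shows "(cyclic_shift_mat n * X) $$ (r,c) = X $$ (cyclic_pred n r, c)"
proof -
  have "(cyclic_shift_mat n * X) $$ (r,c) =
        (\<Sum>k\<in>{0..<Suc n}. (if k = cyclic_pred n r then 1 else 0) * X $$ (k,c))"
    using assms by (simp add: cyclic_shift_mat_def scalar_prod_def del: sum.op_ivl_Suc)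
  also have "\<dots> = (\<Sum>k\<in>{0..<Suc n}. if k = cyclic_pred n r then X $$ (k,c) else 0)"
    by (rule sum.cong) auto
  finally show ?thesis using cyclic_pred_le[OF assms(2)] by simp
qed

lemma mult_transpose_cyclic_shift_mat_index:
  assumes "X \<in> carrier_mat (Suc n) (Suc n)" "r \<le> n" "c \<le> n"
  shows "(X * (cyclic_shift_mat n)\<^sup>T) $$ (r,c) = X $$ (r, cyclic_pred n c)"
proof -
  have "(X * (cyclic_shift_mat n)\<^sup>T) $$ (r,c) =
        (\<Sum>k\<in>{0..<Suc n}. X $$ (r,k) * (if k = cyclic_pred n c then 1 else 0))"
    using assms by (simp add: cyclic_shift_mat_def scalar_prod_def del: sum.op_ivl_Suc)
  also have "\<dots> = (\<Sum>k\<in>{0..<Suc n}. if k = cyclic_pred n c then X $$ (r,k) else 0)"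
    by (rule sum.cong) auto
  finally show ?thesis using cyclic_pred_le[OF assms(3)] by simp
qed

lemma cyclic_shift_mat_mult_transpose: "cyclic_shift_mat n * (cyclic_shift_mat n)\<^sup>T = 1\<^sub>m (n+1)"
proof (rule eq_matI)
  fix r c assume "r < dim_row (1\<^sub>m (n+1))" "c < dim_col (1\<^sub>m (n+1))"
  then show "(cyclic_shift_mat n * (cyclic_shift_mat n)\<^sup>T) $$ (r,c) = 1\<^sub>m (n+1) $$ (r,c)"
    using mult_transpose_cyclic_shift_mat_index[of "cyclic_shift_mat n" n r c]
      cyclic_pred_le[of r n] cyclic_pred_le[of c n] cyclic_pred_eq_iff[of r n c]
    by (auto simp: cyclic_shift_mat_def)
qed (simp_all add: cyclic_shift_mat_def)

lemma transpose_cyclic_shift_mat_mult: "(cyclic_shift_mat n)\<^sup>T * cyclic_shift_mat n = 1\<^sub>m (n+1)"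
  by (rule mat_mult_left_right_inverse[OF _ _ cyclic_shift_mat_mult_transpose]) simp_all

lemma local_mat_lower_block_index:
  assumes "1 \<le> i" "r \<le> n" "c \<le> n"
  shows "local_mat n i (m3 [[1,0,0],[0,x,y],[0,z,w]]) $$ (r,c) =
    (if r = i \<and> c = i then x else if r = i \<and> c = i+1 then y else if r = i+1 \<and> c = i then z
     else if r = i+1 \<and> c = i+1 then w else if r = c then 1 else 0)"
proof -
  obtain j where j: "i = Suc j" using assms(1) by (cases i) auto
  have "r = j \<or> r = Suc j \<or> r = Suc (Suc j) \<or> r < j \<or> Suc (Suc j) < r" by linarith
  moreover have "c = j \<or> c = Suc j \<or> c = Suc (Suc j) \<or> c < j \<or> Suc (Suc j) < c" by linarith
  ultimately show ?thesis using assms unfolding j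
    by (elim disjE) (simp_all add: local_mat_index m3_index)
qed

lemma local_mat_upper_block_index:
  assumes "1 \<le> i" "r \<le> n" "c \<le> n"
  shows "local_mat n i (m3 [[x,y,0],[z,w,0],[0,0,1]]) $$ (r,c) =
    (if r = i-1 \<and> c = i-1 then x else if r = i-1 \<and> c = i then y else if r = i \<and> c = i-1 then z
     else if r = i \<and> c = i then w else if r = c then 1 else 0)"
proof -
  obtain j where j: "i = Suc j" using assms(1) by (cases i) auto
  have "r = j \<or> r = Suc j \<or> r = Suc (Suc j) \<or> r < j \<or> Suc (Suc j) < r" by linarith
  moreover have "c = j \<or> c = Suc j \<or> c = Suc (Suc j) \<or> c < j \<or> Suc (Suc j) < c" by linarith
  ultimately show ?thesis using assms unfolding j
    by (elim disjE) (simp_all add: local_mat_index m3_index)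
qed

lemma local_mat_cyclic_pred_index:
  assumes "1 \<le> i" "i + 1 \<le> n" "r \<le> n" "c \<le> n"
  shows "local_mat n i (m3 [[x,y,0],[z,w,0],[0,0,1]]) $$ (cyclic_pred n r, cyclic_pred n c) =
    local_mat n i (m3 [[1,0,0],[0,x,y],[0,z,w]]) $$ (r,c)"
proof -
  obtain j where j: "i = Suc j" using assms(1) by (cases i) auto
  then have "j < n" "Suc j < n" using assms(2) by simp_all
  then show ?thesis
    using assms cyclic_pred_le[OF assms(3)] cyclic_pred_le[OF assms(4)] unfolding j
    by (simp add: local_mat_lower_block_index local_mat_upper_block_index
        cyclic_pred_eq_iff_Suc cyclic_pred_eq_iff)
qed

lemma local_mat_cyclic_shift:
  assumes "1 \<le> i" "i + 1 \<le> n"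
  shows "local_mat n i (m3 [[1,0,0],[0,x,y],[0,z,w]]) =
    cyclic_shift_mat n * local_mat n i (m3 [[x,y,0],[z,w,0],[0,0,1]]) * (cyclic_shift_mat n)\<^sup>T"
    (is "?L = ?P * ?A * ?P\<^sup>T")
proof (rule eq_matI)
  fix r c assume "r < dim_row (?P * ?A * ?P\<^sup>T)" "c < dim_col (?P * ?A * ?P\<^sup>T)"
  then have rc: "r \<le> n" "c \<le> n" by (simp_all add: cyclic_shift_mat_def)
  have "(?P * ?A * ?P\<^sup>T) $$ (r,c) = ?A $$ (cyclic_pred n r, cyclic_pred n c)"
    using rc cyclic_pred_le[OF rc(1)] cyclic_pred_le[OF rc(2)]
    by (simp add: mult_transpose_cyclic_shift_mat_index cyclic_shift_mat_mult_index
        mult_carrier_mat[of _ "Suc n" "Suc n"])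
  then show "?L $$ (r,c) = (?P * ?A * ?P\<^sup>T) $$ (r,c)"
    using local_mat_cyclic_pred_index[OF assms rc] by simp
qed (simp_all add: cyclic_shift_mat_def local_mat_def)

lemma equiv_local_refl: "equiv_local n M N M N"
  unfolding equiv_local_def
  by (intro exI[of _ "1\<^sub>m (n+1)"] conjI ballI) (auto simp: local_mat_def)

lemma equiv_local_cyclic_shift:
  "equiv_local n (m3 [[1,0,0],[0,x,y],[0,z,w]]) (m3 [[1,0,0],[0,x',y'],[0,z',w']])
                 (m3 [[x,y,0],[z,w,0],[0,0,1]]) (m3 [[x',y',0],[z',w',0],[0,0,1]])"
  unfolding equiv_local_def
  by (rule exI[of _ "cyclic_shift_mat n"], rule exI[of _ "(cyclic_shift_mat n)\<^sup>T"])
    (auto simp: cyclic_shift_mat_mult_transpose transpose_cyclic_shift_mat_mult local_mat_cyclic_shift)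

theorem theorem4p1:
  fixes n :: nat and M N :: "complex mat"
  assumes "n \<ge> 4"
    and "hom_3local_rep n M N"
  shows "\<exists>j\<in>{1..14}. \<exists>M' N'. family j M' N' \<and> equiv_local n M N M' N'"
  using hom_3local_rep_classification[OF assms]
proof
  assume "\<exists>j\<in>{1..14}. family j M N"
  then show ?thesis using equiv_local_refl by blast
next
  assume "\<exists>y p. p \<noteq> 0 \<and> N = m3 [[1,0,0],[0,0,p],[0,1/p,0]] \<and>
    (M = m3 [[1,0,0],[0,1,y],[0,0,-1]] \<or> M = m3 [[1,0,0],[0,-1,y],[0,0,1]])"
  then obtain y p where p: "p \<noteq> 0" and N: "N = m3 [[1,0,0],[0,0,p],[0,1/p,0]]"
    and M: "M = m3 [[1,0,0],[0,1,y],[0,0,-1]] \<or> M = m3 [[1,0,0],[0,-1,y],[0,0,1]]"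
    by blast
  let ?N' = "m3 [[0,p,0],[1/p,0,0],[0,0,1]]"
  have "family 5 (m3 [[1,y,0],[0,-1,0],[0,0,1]]) ?N'" "family 6 (m3 [[-1,y,0],[0,1,0],[0,0,1]]) ?N'"
    using p by (auto simp: family_def)
  moreover have "equiv_local n M N (m3 [[1,y,0],[0,-1,0],[0,0,1]]) ?N' \<or>
                 equiv_local n M N (m3 [[-1,y,0],[0,1,0],[0,0,1]]) ?N'"
    using M unfolding N by (metis equiv_local_cyclic_shift)
  moreover have "(5::nat) \<in> {1..14}" "(6::nat) \<in> {1..14}" by simp_all
  ultimately show ?thesis by blast
qed

end
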